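(* Let $x$ be a stable g-matching with $x\ne x^{\max}$, let $w\in W$, and let $(c(1),a(1)),\dots,(c(k),a(k))$ be pairwise edge-disjoint essential $w$-pairs under $x$. Let $I\subseteq\{1,\dots,k\}$ and $z^I:=x_w+\sum_{i\in I}(\mathbf 1^{a(i)}-\mathbf 1^{c(i)})$. Then: (i) $z^I$ is acceptable, i.e. $C_w(z^I)=z^I$; (ii) no edge $e\in U_F^+(x)$ is interesting for $w$ under $z^I$; and (iii) for each $j\in\{1,\dots,k\}\setminus I$, the pair $(c(j),a(j))$ is essential under $z^I$ (with $z^I$ in place of $x_w$ in the definitions of legal and essential $w$-pairs).
   Context: Let $G=(V,E)$ be a finite bipartite graph with color classes $W$ and $F$; the edge joining $w\in W$ and $f\in F$ is written $wf$. Let $b\in\mathbb Z_+^E$ be capacities. For $v\in V$, $E_v$ is the set of edges at $v$, $\mathcal B_v=\{z\in\mathbb Z_+^{E_v}: z\le b|_{E_v}\}$, $\mathbf 1^e$ the unit vector of $e$, $|z|=\sum_e|z(e)|$, $\wedge,\vee$ componentwise min/max. Each $v$ has a choice function $C_v:\mathcal B_v\to\mathcal B_v$ with $C_v(z)\le z$ and, for all $z,z'$: (A1) $z\ge z'\ge C_v(z)\Rightarrow C_v(z')=C_v(z)$; (A2) $z\ge z'\Rightarrow C_v(z)\wedge z'\le C_v(z')$; (A3) $z\ge z'\Rightarrow|C_v(z)|\ge|C_v(z')|$. $z$ is acceptable if $C_v(z)=z$; for distinct acceptable $z,z'$, $z'\prec_v z$ iff $C_v(z\vee z')=z$. $x_v$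 = restriction of $x$ to $E_v$. A g-matching is $x\in\mathbb Z_+^E$, $x\le b$, each $x_v$ acceptable; $x\prec_F y$ (distinct) iff $x_f\preceq_f y_f$ for all $f\in F$. $e\in E_v$ is interesting for $v$ under acceptable $z$ if some $z'\in\mathcal B_v$ has $z'(e)>z(e)$, $z'(e')=z(e')$ for $e'\neq e$, $C_v(z')(e)>z(e)$; $e=wf$ is interesting for $v\in\{w,f\}$ under a g-matching $x$ if so under $x_v$, and blocks $x$ if interesting for both endpoints; stable g-matchings (no blocking edge) form a finite lattice under $\prec_F$ with maximum $x^{\max}$. For stable $x$: $U_F^+(x)$ = edges $wf$ interesting for $f$ under $x$; $U_F^-(x)$ = edges $wf$ with $x(wf)>0$ not interesting for $f$ under $x$. For $w\in W$, a legal $w$-pair under $x$ is $(c,a)$ with $c\in U_F^-(x)\cap E_w$, $a\in U_F^+(x)\cap E_w$ and $C_w(x_w+\mathbf 1^a-\mathbf 1^c)=x_w+\mathbf 1^a-\mathbf 1^c$; it is essential if no $d\in(U_F^+(x)\cap E_w)\setminus\{a\}$ is interesting for $w$ under $x_w+\mathbf 1^a-\mathbf 1^c$. *)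

theory Defs
  imports Main
begin

text \<open>Edges of the bipartite graph are pairs (w,f) with w of type 'w and f of type 'f.
 Vectors indexed by an edge set are functions from edges to nat (vanishing outside the set).\<close>

definition edges_at_W :: "('w \<times> 'f) set \<Rightarrow> 'w \<Rightarrow> ('w \<times> 'f) set" where
  "edges_at_W E w = {e \<in> E. fst e = w}"

definition edges_at_F :: "('w \<times> 'f) set \<Rightarrow> 'f \<Rightarrow> ('w \<times> 'f) set" where
  "edges_at_F E f = {e \<in> E. snd e = f}"

definition inB :: "'e set \<Rightarrow> ('e \<Rightarrow> nat) \<Rightarrow> ('e \<Rightarrow> nat) \<Rightarrow> bool" where
  "inB Ev b z \<longleftrightarrow> (\<forall>e. e \<notin> Ev \<longrightarrow> z e = 0) \<and> (\<forall>e\<in>Ev. z e \<le> b e)"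

definition vnorm :: "'e set \<Rightarrow> ('e \<Rightarrow> nat) \<Rightarrow> nat" where
  "vnorm Ev z = (\<Sum>e\<in>Ev. z e)"

definition choice_fn :: "'e set \<Rightarrow> ('e \<Rightarrow> nat) \<Rightarrow> (('e \<Rightarrow> nat) \<Rightarrow> ('e \<Rightarrow> nat)) \<Rightarrow> bool" where
  "choice_fn Ev b C \<longleftrightarrow>
     (\<forall>z. inB Ev b z \<longrightarrow> inB Ev b (C z) \<and> C z \<le> z) \<and>
     (\<forall>z z'. inB Ev b z \<longrightarrow> inB Ev b z' \<longrightarrow> z \<ge> z' \<longrightarrow> z' \<ge> C z \<longrightarrow> C z' = C z) \<and>
     (\<forall>z z'. inB Ev b z \<longrightarrow> inB Ev b z' \<longrightarrow> z \<ge> z' \<longrightarrow> inf (C z) z' \<le> C z') \<and>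
     (\<forall>z z'. inB Ev b z \<longrightarrow> inB Ev b z' \<longrightarrow> z \<ge> z' \<longrightarrow> vnorm Ev (C z) \<ge> vnorm Ev (C z'))"

definition acceptable :: "(('e \<Rightarrow> nat) \<Rightarrow> ('e \<Rightarrow> nat)) \<Rightarrow> ('e \<Rightarrow> nat) \<Rightarrow> bool" where
  "acceptable C z \<longleftrightarrow> C z = z"

definition pref_v :: "(('e \<Rightarrow> nat) \<Rightarrow> ('e \<Rightarrow> nat)) \<Rightarrow> ('e \<Rightarrow> nat) \<Rightarrow> ('e \<Rightarrow> nat) \<Rightarrow> bool" where
  "pref_v C z' z \<longleftrightarrow> z' \<noteq> z \<and> acceptable C z \<and> acceptable C z' \<and> C (sup z z') = z"

definition weakpref_v :: "(('e \<Rightarrow> nat) \<Rightarrow> ('e \<Rightarrow> nat)) \<Rightarrow> ('e \<Rightarrow> nat) \<Rightarrow> ('e \<Rightarrow> nat) \<Rightarrow> bool" where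
  "weakpref_v C z' z \<longleftrightarrow> z' = z \<or> pref_v C z' z"

definition restr :: "'e set \<Rightarrow> ('e \<Rightarrow> nat) \<Rightarrow> ('e \<Rightarrow> nat)" where
  "restr Ev x = (\<lambda>e. if e \<in> Ev then x e else 0)"

definition interesting :: "'e set \<Rightarrow> ('e \<Rightarrow> nat) \<Rightarrow> (('e \<Rightarrow> nat) \<Rightarrow> ('e \<Rightarrow> nat)) \<Rightarrow> ('e \<Rightarrow> nat) \<Rightarrow> 'e \<Rightarrow> bool" where
  "interesting Ev b C z e \<longleftrightarrow> e \<in> Ev \<and>
     (\<exists>z'. inB Ev b z' \<and> z' e > z e \<and> (\<forall>e'\<in>Ev. e' \<noteq> e \<longrightarrow> z' e' = z e') \<and> C z' e > z e)"

definition gmodel :: "'w set \<Rightarrow> 'f set \<Rightarrow> ('w \<times> 'f) set \<Rightarrow> (('w \<times> 'f) \<Rightarrow> nat)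
    \<Rightarrow> ('w \<Rightarrow> (('w \<times> 'f) \<Rightarrow> nat) \<Rightarrow> (('w \<times> 'f) \<Rightarrow> nat))
    \<Rightarrow> ('f \<Rightarrow> (('w \<times> 'f) \<Rightarrow> nat) \<Rightarrow> (('w \<times> 'f) \<Rightarrow> nat)) \<Rightarrow> bool" where
  "gmodel W F E b CW CF \<longleftrightarrow> finite W \<and> finite F \<and> E \<subseteq> W \<times> F \<and>
     (\<forall>w\<in>W. choice_fn (edges_at_W E w) b (CW w)) \<and>
     (\<forall>f\<in>F. choice_fn (edges_at_F E f) b (CF f))"

definition g_matching where
  "g_matching W F E b CW CF x \<longleftrightarrow>
     (\<forall>e. e \<notin> E \<longrightarrow> x e = 0) \<and> (\<forall>e\<in>E. x e \<le> b e) \<and>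
     (\<forall>w\<in>W. acceptable (CW w) (restr (edges_at_W E w) x)) \<and>
     (\<forall>f\<in>F. acceptable (CF f) (restr (edges_at_F E f) x))"

definition blocks where
  "blocks E b CW CF x e \<longleftrightarrow> e \<in> E \<and>
     interesting (edges_at_W E (fst e)) b (CW (fst e)) (restr (edges_at_W E (fst e)) x) e \<and>
     interesting (edges_at_F E (snd e)) b (CF (snd e)) (restr (edges_at_F E (snd e)) x) e"

definition stable where
  "stable W F E b CW CF x \<longleftrightarrow> g_matching W F E b CW CF x \<and> \<not> (\<exists>e. blocks E b CW CF x e)"

definition pref_F where
  "pref_F F E CF x y \<longleftrightarrow> x \<noteq> y \<and>
     (\<forall>f\<in>F. weakpref_v (CF f) (restr (edges_at_F E f) x) (restr (edges_at_F E f) y))"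

definition is_max_stable where
  "is_max_stable W F E b CW CF xm \<longleftrightarrow> stable W F E b CW CF xm \<and>
     (\<forall>y. stable W F E b CW CF y \<longrightarrow> y = xm \<or> pref_F F E CF y xm)"

definition U_F_plus where
  "U_F_plus E b CF x = {e \<in> E. interesting (edges_at_F E (snd e)) b (CF (snd e)) (restr (edges_at_F E (snd e)) x) e}"

definition U_F_minus where
  "U_F_minus E b CF x = {e \<in> E. x e > 0 \<and>
      \<not> interesting (edges_at_F E (snd e)) b (CF (snd e)) (restr (edges_at_F E (snd e)) x) e}"

text \<open>z + 1^a - 1^c (computed in the integers; nonnegative in all uses).\<close>
definition shift :: "('e \<Rightarrow> nat) \<Rightarrow> 'e \<Rightarrow> 'e \<Rightarrow> ('e \<Rightarrow> nat)" where
  "shift z a c = (\<lambda>e. nat (int (z e) + (if e = a then 1 else 0) - (if e = c then 1 else 0)))"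

text \<open>Legal / essential w-pairs under x, with base vector z in place of x_w
  (the original notions are the case z = x_w).\<close>
definition legal_pair where
  "legal_pair E b CW CF x w z c a \<longleftrightarrow>
     c \<in> U_F_minus E b CF x \<inter> edges_at_W E w \<and> a \<in> U_F_plus E b CF x \<inter> edges_at_W E w \<and>
     CW w (shift z a c) = shift z a c"

definition essential_pair where
  "essential_pair E b CW CF x w z c a \<longleftrightarrow> legal_pair E b CW CF x w z c a \<and>
     \<not> (\<exists>d \<in> (U_F_plus E b CF x \<inter> edges_at_W E w) - {a}.
          interesting (edges_at_W E w) b (CW w) (shift z a c) d)"

end

theory Submission
  imports Defs
begin

(* Write Z I for x_w + sum_{i in I} (1^{a(i)} - 1^{c(i)}); it has the same size as x_w. By (A1) and
   (A2), raising an acceptable vector only along edges that are not interesting for it does not change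
   the choice. Hence, if z' >= Z I exceeds Z I only on U_F^+(x), then C_w(x_w v z') = x_w, and comparing
   with x_w (off the a(i)) and with the single swaps Z {i} (at a(i)) gives C_w(z') >= Z I wherever
   z' = Z I. For z' = Z I this is acceptability. If some d in U_F^+(x) were interesting under Z I, its
   witness z' would satisfy |C_w(z')| > |Z I| = |x_w| = |C_w(x_w v z')|, contradicting (A3).
   Essentiality of the remaining pairs is the same statement for I + {j}. *)

lemma choice_fn_le: "choice_fn Ev b C \<Longrightarrow> inB Ev b z \<Longrightarrow> C z \<le> z"
  unfolding choice_fn_def by blast

lemma choice_fn_consistent:
  "choice_fn Ev b C \<Longrightarrow> inB Ev b z \<Longrightarrow> inB Ev b z' \<Longrightarrow> z' \<le> z \<Longrightarrow> C z \<le> z'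
    \<Longrightarrow> C z' = C z"
  unfolding choice_fn_def by blast

lemma choice_fn_substitutable:
  "choice_fn Ev b C \<Longrightarrow> inB Ev b z \<Longrightarrow> inB Ev b z' \<Longrightarrow> z' \<le> z
    \<Longrightarrow> inf (C z) z' \<le> C z'"
  unfolding choice_fn_def by blast

lemma choice_fn_size_mono:
  "choice_fn Ev b C \<Longrightarrow> inB Ev b z \<Longrightarrow> inB Ev b z' \<Longrightarrow> z' \<le> z
    \<Longrightarrow> vnorm Ev (C z') \<le> vnorm Ev (C z)"
  unfolding choice_fn_def by blast

lemma inB_sup: "inB Ev b z \<Longrightarrow> inB Ev b z' \<Longrightarrow> inB Ev b (sup z z')"
  unfolding inB_def by auto

lemma choice_fn_sup_eq_if_uninteresting:
  assumes C: "choice_fn Ev b C" and z: "inB Ev b z" and z_acc: "C z = z" and z': "inB Ev b z'"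
    and uninteresting: "\<And>e. z e < z' e \<Longrightarrow> \<not> interesting Ev b C z e"
  shows "C (sup z z') = z"
proof -
  let ?R = "sup z z'"
  have R: "inB Ev b ?R" using z z' by (rule inB_sup)
  have "C ?R e \<le> z e" for e
  proof (cases "z e < z' e")
    case False
    then show ?thesis using le_funD[OF choice_fn_le[OF C R], of e] by (simp add: sup_nat_def)
  next
    case True
    then have e: "e \<in> Ev" using z' unfolding inB_def by (metis not_less0)
    define u where "u = z(e := z' e)"
    have u: "inB Ev b u" using z z' e unfolding inB_def u_def by auto
    have "C u e \<le> z e"
    proof (rule ccontr)
      assume "\<not> C u e \<le> z e"
      then have "interesting Ev b C z e"
        unfolding interesting_def using e u True by (intro conjI exI[of _ u]) (auto simp: u_def)
      then show False using uninteresting[OF True] by contradiction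
    qed
    moreover have "min (C ?R e) (z' e) \<le> C u e"
    proof -
      have "inf (C ?R) u \<le> C u"
        using choice_fn_substitutable[OF C R u] by (simp add: u_def le_fun_def)
      then show ?thesis using le_funD[of "inf (C ?R) u" "C u" e] by (simp add: u_def inf_nat_def)
    qed
    moreover have "C ?R e \<le> z' e"
      using le_funD[OF choice_fn_le[OF C R], of e] True by (simp add: sup_nat_def)
    ultimately show ?thesis by linarith
  qed
  then have "C ?R \<le> z" by (simp add: le_fun_def)
  then have "C z = C ?R" using choice_fn_consistent[OF C R z] by simp
  with z_acc show ?thesis by simp
qed

lemma choice_fn_inf_le_if_sup_eq:
  assumes "choice_fn Ev b C" "inB Ev b z" "inB Ev b z'" "C (sup z z') = z"
  shows "inf z z' \<le> C z'"
  using choice_fn_substitutable[OF assms(1) inB_sup[OF assms(2,3)] assms(3)] assms(4) by simp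

(* With injective a, c and a ` I, c ` I disjoint this is the paper's x_w + sum_{i in I} (1^{a(i)} - 1^{c(i)});
   the truncated subtraction is harmless because c-edges carry positive weight wherever it is used. *)
definition apply_swaps ::
    "('e \<Rightarrow> nat) \<Rightarrow> ('i \<Rightarrow> 'e) \<Rightarrow> ('i \<Rightarrow> 'e) \<Rightarrow> 'i set \<Rightarrow> 'e \<Rightarrow> nat" where
  "apply_swaps y a c I e = (if e \<in> a ` I then y e + 1 else if e \<in> c ` I then y e - 1 else y e)"

lemma shift_eq_apply_swaps_singleton:
  "a j \<noteq> c j \<Longrightarrow> 0 < y (c j) \<Longrightarrow> shift y (a j) (c j) = apply_swaps y a c {j}"
  unfolding shift_def apply_swaps_def by (auto intro!: ext)

lemma sum_indicator_eq_image:
  "finite I \<Longrightarrow> inj_on a I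
    \<Longrightarrow> (\<Sum>i\<in>I. if e = a i then 1 else 0) = (if e \<in> a ` I then 1 else (0::int))"
  using sum.reindex[of a I "\<lambda>x. if e = x then 1 else (0::int)"] by (simp add: sum.delta)

definition increase_within :: "'e set \<Rightarrow> ('e \<Rightarrow> nat) \<Rightarrow> ('e \<Rightarrow> nat) \<Rightarrow> bool" where
  "increase_within U z z' \<longleftrightarrow> z \<le> z' \<and> (\<forall>e. z e < z' e \<longrightarrow> e \<in> U)"

(* A family of pairwise disjoint essential w-pairs (c(j), a(j)), j in S, abstracted from the graph:
   y plays x_w and U plays U_F^+(x) restricted to E_w. *)
locale essential_swaps =
  fixes Ev :: "'e set" and b :: "'e \<Rightarrow> nat" and C :: "('e \<Rightarrow> nat) \<Rightarrow> ('e \<Rightarrow> nat)"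
    and y :: "'e \<Rightarrow> nat" and U :: "'e set" and S :: "'i set" and a c :: "'i \<Rightarrow> 'e"
  assumes finite_Ev: "finite Ev"
    and choice: "choice_fn Ev b C"
    and y_inB: "inB Ev b y" and y_acceptable: "C y = y"
    and U_subset: "U \<subseteq> Ev"
    and U_uninteresting: "\<And>d. d \<in> U \<Longrightarrow> \<not> interesting Ev b C y d"
    and a_in_U: "\<And>j. j \<in> S \<Longrightarrow> a j \<in> U"
    and c_notin_U: "\<And>j. j \<in> S \<Longrightarrow> c j \<notin> U"
    and c_pos: "\<And>j. j \<in> S \<Longrightarrow> 0 < y (c j)"
    and a_below_b: "\<And>j. j \<in> S \<Longrightarrow> y (a j) < b (a j)"
    and inj_a: "inj_on a S" and inj_c: "inj_on c S"
    and single_swap_acceptable: "\<And>j. j \<in> S \<Longrightarrow> C (apply_swaps y a c {j}) = apply_swaps y a c {j}"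
    and single_swap_essential:
      "\<And>j d. j \<in> S \<Longrightarrow> d \<in> U - {a j} \<Longrightarrow> \<not> interesting Ev b C (apply_swaps y a c {j}) d"
begin

abbreviation Z :: "'i set \<Rightarrow> 'e \<Rightarrow> nat" where
  "Z I \<equiv> apply_swaps y a c I"

lemma a_ne_c: "i \<in> S \<Longrightarrow> j \<in> S \<Longrightarrow> a i \<noteq> c j"
  using a_in_U c_notin_U by metis

lemma a_c_image_disjoint: "I \<subseteq> S \<Longrightarrow> J \<subseteq> S \<Longrightarrow> a ` I \<inter> c ` J = {}"
  using a_ne_c by blast

lemma apply_swaps_le_y: "e \<notin> a ` I \<Longrightarrow> Z I e \<le> y e"
  unfolding apply_swaps_def by simp

lemma apply_swaps_inB: "I \<subseteq> S \<Longrightarrow> inB Ev b (Z I)"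
  using y_inB a_in_U U_subset a_below_b c_pos unfolding inB_def apply_swaps_def
  by (auto simp: Suc_le_eq subset_eq)

lemma apply_swaps_singleton_less:
  assumes "I \<subseteq> S" "j \<in> I" "Z {j} e < Z I e"
  shows "e \<in> a ` I - {a j}"
  using assms a_ne_c unfolding apply_swaps_def by (auto split: if_splits)

lemma choice_sup_y_eq_y:
  assumes I: "I \<subseteq> S" and z': "inB Ev b z'" and incr: "increase_within U (Z I) z'"
  shows "C (sup y z') = y"
proof (rule choice_fn_sup_eq_if_uninteresting[OF choice y_inB y_acceptable z'])
  from incr have above: "Z I \<le> z'" and raised: "\<And>e. Z I e < z' e \<Longrightarrow> e \<in> U"
    unfolding increase_within_def by auto
  fix e assume less: "y e < z' e"
  have "e \<in> U"
  proof (cases "Z I e < z' e")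
    case True
    then show ?thesis by (rule raised)
  next
    case False
    with le_funD[OF above, of e] have "Z I e = z' e" by simp
    with less have "e \<in> a ` I" using apply_swaps_le_y by (metis not_le)
    with I a_in_U show ?thesis by auto
  qed
  then show "\<not> interesting Ev b C y e" by (rule U_uninteresting)
qed

lemma apply_swaps_le_choice:
  assumes I: "I \<subseteq> S" and z': "inB Ev b z'" and incr: "increase_within U (Z I) z'"
    and e: "z' e = Z I e"
  shows "Z I e \<le> C z' e"
proof (cases "e \<in> a ` I")
  case True
  from incr have above: "Z I \<le> z'" and raised: "\<And>e. Z I e < z' e \<Longrightarrow> e \<in> U"
    unfolding increase_within_def by auto
  from True obtain j where j: "j \<in> I" and e_a: "e = a j" by blast
  with I have jS: "j \<in> S" by blast
  have j_inB: "inB Ev b (Z {j})" using jS by (simp add: apply_swaps_inB)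
  have "C (sup (Z {j}) z') = Z {j}"
  proof (rule choice_fn_sup_eq_if_uninteresting[OF choice j_inB single_swap_acceptable[OF jS] z'])
    fix e' assume less: "Z {j} e' < z' e'"
    have "e' \<in> U - {a j}"
    proof (cases "Z I e' < z' e'")
      case True
      then show ?thesis using raised e e_a by auto
    next
      case False
      with le_funD[OF above, of e'] have "Z I e' = z' e'" by simp
      with less have "e' \<in> a ` I - {a j}" using apply_swaps_singleton_less[OF I j] by simp
      with I a_in_U show ?thesis by auto
    qed
    with jS show "\<not> interesting Ev b C (Z {j}) e'" by (rule single_swap_essential)
  qed
  then have "inf (Z {j}) z' \<le> C z'"
    by (rule choice_fn_inf_le_if_sup_eq[OF choice j_inB z'])
  moreover have "Z {j} e = Z I e" using True e_a unfolding apply_swaps_def by simp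
  ultimately show ?thesis using e le_funD[of "inf (Z {j}) z'" "C z'" e] by (simp add: inf_nat_def)
next
  case False
  have "inf y z' \<le> C z'"
    using choice_fn_inf_le_if_sup_eq[OF choice y_inB z' choice_sup_y_eq_y[OF I z' incr]] .
  then show ?thesis
    using e apply_swaps_le_y[OF False] le_funD[of "inf y z'" "C z'" e] by (simp add: inf_nat_def)
qed

lemma vnorm_apply_swaps:
  assumes I: "I \<subseteq> S"
  shows "vnorm Ev (Z I) = vnorm Ev y"
proof -
  have "Z I e + of_bool (e \<in> c ` I) = y e + of_bool (e \<in> a ` I)" for e
    using a_c_image_disjoint[OF I I] c_pos I unfolding apply_swaps_def by auto
  then have "(\<Sum>e\<in>Ev. Z I e + of_bool (e \<in> c ` I)) = (\<Sum>e\<in>Ev. y e + of_bool (e \<in> a ` I))"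
    by simp
  then have "vnorm Ev (Z I) + card (Ev \<inter> c ` I) = vnorm Ev y + card (Ev \<inter> a ` I)"
    unfolding vnorm_def sum.distrib using finite_Ev by simp
  moreover have "card (Ev \<inter> c ` I) = card (Ev \<inter> a ` I)"
  proof -
    have "Ev \<inter> a ` I = a ` I" using I a_in_U U_subset by blast
    moreover have "Ev \<inter> c ` I = c ` I" using I c_pos y_inB unfolding inB_def by fastforce
    ultimately show ?thesis
      using card_image[OF inj_on_subset[OF inj_a I]] card_image[OF inj_on_subset[OF inj_c I]] by simp
  qed
  ultimately show ?thesis by simp
qed

lemma apply_swaps_acceptable:
  assumes I: "I \<subseteq> S"
  shows "C (Z I) = Z I"
proof (rule antisym)
  have incr: "increase_within U (Z I) (Z I)" unfolding increase_within_def by simp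
  show "Z I \<le> C (Z I)"
    using apply_swaps_le_choice[OF I apply_swaps_inB[OF I] incr] by (simp add: le_fun_def)
  show "C (Z I) \<le> Z I" by (rule choice_fn_le[OF choice apply_swaps_inB[OF I]])
qed

lemma apply_swaps_uninteresting:
  assumes I: "I \<subseteq> S" and d: "d \<in> U"
  shows "\<not> interesting Ev b C (Z I) d"
proof
  assume "interesting Ev b C (Z I) d"
  then obtain z' where dEv: "d \<in> Ev" and z': "inB Ev b z'" and gt: "Z I d < z' d"
    and same: "\<forall>e\<in>Ev. e \<noteq> d \<longrightarrow> z' e = Z I e" and chosen: "Z I d < C z' d"
    unfolding interesting_def by blast
  have same': "z' e = Z I e" if "e \<noteq> d" for e
    using same that z' apply_swaps_inB[OF I] unfolding inB_def by (cases "e \<in> Ev") auto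
  have incr: "increase_within U (Z I) z'"
    unfolding increase_within_def le_fun_def using same' gt d by (metis order.refl less_imp_le less_irrefl)
  have "vnorm Ev (Z I) < vnorm Ev (C z')"
    unfolding vnorm_def
  proof (rule sum_strict_mono_ex1[OF finite_Ev])
    show "\<forall>e\<in>Ev. Z I e \<le> C z' e"
    proof
      fix e
      show "Z I e \<le> C z' e"
      proof (cases "e = d")
        case True
        with chosen show ?thesis by simp
      next
        case False
        then show ?thesis by (rule apply_swaps_le_choice[OF I z' incr same'])
      qed
    qed
    show "\<exists>e\<in>Ev. Z I e < C z' e" using dEv chosen by blast
  qed
  also have "vnorm Ev (C z') \<le> vnorm Ev (C (sup y z'))"
    using choice_fn_size_mono[OF choice inB_sup[OF y_inB z'] z'] by simp
  also have "\<dots> = vnorm Ev (Z I)"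
    using choice_sup_y_eq_y[OF I z' incr] vnorm_apply_swaps[OF I] by simp
  finally show False by simp
qed

lemma apply_swaps_insert:
  assumes j: "j \<in> S" "j \<notin> I" and I: "I \<subseteq> S"
  shows "shift (Z I) (a j) (c j) = Z (insert j I)"
proof
  fix e
  have "a j \<notin> a ` I" "c j \<notin> c ` I"
    using j I inj_on_image_mem_iff[OF inj_a] inj_on_image_mem_iff[OF inj_c] by auto
  moreover have "a ` insert j I \<inter> c ` insert j I = {}"
    using j I by (intro a_c_image_disjoint) auto
  ultimately show "shift (Z I) (a j) (c j) e = Z (insert j I) e"
    using c_pos[OF j(1)] by (cases "e = a j"; cases "e = c j") (auto simp: shift_def apply_swaps_def)
qed

lemma apply_swaps_eq_sum:
  assumes I: "I \<subseteq> S"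
  shows "Z I e = nat (int (y e) + (\<Sum>i\<in>I. (if e = a i then 1 else 0) - (if e = c i then 1 else 0)))"
proof -
  have "finite I"
    using finite_imageD[OF finite_subset[OF _ finite_Ev] inj_on_subset[OF inj_a I]] I a_in_U U_subset
    by blast
  then have "(\<Sum>i\<in>I. (if e = a i then 1 else 0) - (if e = c i then 1 else 0))
      = (if e \<in> a ` I then 1 else 0) - (if e \<in> c ` I then (1::int) else 0)"
    by (simp add: sum_subtractf sum_indicator_eq_image inj_on_subset[OF inj_a I] inj_on_subset[OF inj_c I])
  then show ?thesis
    using a_c_image_disjoint[OF I I] c_pos I unfolding apply_swaps_def by auto
qed

end

lemma U_F_plus_below_capacity: "e \<in> U_F_plus E b CF x \<Longrightarrow> x e < b e"
  unfolding U_F_plus_def interesting_def inB_def restr_def by fastforce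

lemma stable_U_F_plus_not_interesting_for_W:
  "stable W F E b CW CF x \<Longrightarrow> e \<in> U_F_plus E b CF x
    \<Longrightarrow> \<not> interesting (edges_at_W E (fst e)) b (CW (fst e)) (restr (edges_at_W E (fst e)) x) e"
  unfolding stable_def blocks_def U_F_plus_def by blast

lemma essential_swaps_at_W:
  assumes model: "gmodel W F E b CW CF" and stab: "stable W F E b CW CF x" and w: "w \<in> W"
    and ess: "\<forall>i\<in>S. essential_pair E b CW CF x w (restr (edges_at_W E w) x) (c i) (a i)"
    and disj: "\<forall>i\<in>S. \<forall>j\<in>S. i \<noteq> j \<longrightarrow> {c i, a i} \<inter> {c j, a j} = {}"
  shows "essential_swaps (edges_at_W E w) b (CW w) (restr (edges_at_W E w) x)
           (U_F_plus E b CF x \<inter> edges_at_W E w) S a c"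
proof -
  let ?Ev = "edges_at_W E w" and ?y = "restr (edges_at_W E w) x"
  have matching: "g_matching W F E b CW CF x" using stab unfolding stable_def by blast
  have c_minus: "c j \<in> U_F_minus E b CF x \<inter> ?Ev" and a_plus: "a j \<in> U_F_plus E b CF x \<inter> ?Ev"
    if "j \<in> S" for j
    using ess that unfolding essential_pair_def legal_pair_def by auto
  have c_pos: "0 < ?y (c j)" if "j \<in> S" for j
    using c_minus[OF that] unfolding U_F_minus_def restr_def by auto
  have single: "shift ?y (a j) (c j) = apply_swaps ?y a c {j}" if "j \<in> S" for j
  proof (rule shift_eq_apply_swaps_singleton)
    show "a j \<noteq> c j"
      using a_plus[OF that] c_minus[OF that] unfolding U_F_plus_def U_F_minus_def by auto
  qed (rule c_pos[OF that])
  show ?thesis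
  proof unfold_locales
    show "finite ?Ev"
      using model unfolding gmodel_def edges_at_W_def by (auto intro: finite_subset)
    show "choice_fn ?Ev b (CW w)" using model w unfolding gmodel_def by blast
    show "inB ?Ev b ?y" using matching unfolding g_matching_def inB_def restr_def by auto
    show "CW w ?y = ?y" using matching w unfolding g_matching_def acceptable_def by blast
    show "U_F_plus E b CF x \<inter> ?Ev \<subseteq> ?Ev" by blast
    show "\<not> interesting ?Ev b (CW w) ?y d" if "d \<in> U_F_plus E b CF x \<inter> ?Ev" for d
      using stable_U_F_plus_not_interesting_for_W[OF stab, of d] that unfolding edges_at_W_def by auto
    show "a j \<in> U_F_plus E b CF x \<inter> ?Ev" if "j \<in> S" for j using a_plus[OF that] .
    show "c j \<notin> U_F_plus E b CF x \<inter> ?Ev" if "j \<in> S" for j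
      using c_minus[OF that] unfolding U_F_plus_def U_F_minus_def by auto
    show "0 < ?y (c j)" if "j \<in> S" for j using c_pos[OF that] .
    show "?y (a j) < b (a j)" if "j \<in> S" for j
      using U_F_plus_below_capacity[of "a j"] a_plus[OF that] unfolding restr_def by auto
    show "inj_on a S" "inj_on c S" using disj unfolding inj_on_def by blast+
    show "CW w (apply_swaps ?y a c {j}) = apply_swaps ?y a c {j}" if "j \<in> S" for j
      using ess single[OF that] that unfolding essential_pair_def legal_pair_def by metis
    show "\<not> interesting ?Ev b (CW w) (apply_swaps ?y a c {j}) d"
      if "j \<in> S" "d \<in> U_F_plus E b CF x \<inter> ?Ev - {a j}" for j d
      using ess single[OF that(1)] that unfolding essential_pair_def by auto
  qed
qed

theorem corollary3p8:
  fixes W :: "'w set" and F :: "'f set" and E :: "('w \<times> 'f) set"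
    and b :: "('w \<times> 'f) \<Rightarrow> nat"
    and CW :: "'w \<Rightarrow> (('w \<times> 'f) \<Rightarrow> nat) \<Rightarrow> (('w \<times> 'f) \<Rightarrow> nat)"
    and CF :: "'f \<Rightarrow> (('w \<times> 'f) \<Rightarrow> nat) \<Rightarrow> (('w \<times> 'f) \<Rightarrow> nat)"
    and x xmax :: "('w \<times> 'f) \<Rightarrow> nat" and w :: 'w and k :: nat
    and c a :: "nat \<Rightarrow> ('w \<times> 'f)" and I :: "nat set"
  assumes model: "gmodel W F E b CW CF"
    and stab: "stable W F E b CW CF x"
    and xmax: "is_max_stable W F E b CW CF xmax"
    and ne: "x \<noteq> xmax"
    and wW: "w \<in> W"
    and ess: "\<forall>i\<in>{1..k}. essential_pair E b CW CF x w (restr (edges_at_W E w) x) (c i) (a i)"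
    and disj: "\<forall>i\<in>{1..k}. \<forall>j\<in>{1..k}. i \<noteq> j \<longrightarrow> {c i, a i} \<inter> {c j, a j} = {}"
    and I: "I \<subseteq> {1..k}"
  defines "zI \<equiv> (\<lambda>e. nat (int (restr (edges_at_W E w) x e)
                   + (\<Sum>i\<in>I. (if e = a i then 1 else 0) - (if e = c i then 1 else 0))))"
  shows "CW w zI = zI \<and>
         (\<forall>e\<in>U_F_plus E b CF x. \<not> interesting (edges_at_W E w) b (CW w) zI e) \<and>
         (\<forall>j\<in>{1..k} - I. essential_pair E b CW CF x w zI (c j) (a j))"
proof -
  let ?Ev = "edges_at_W E w" and ?y = "restr (edges_at_W E w) x"
  interpret essential_swaps ?Ev b "CW w" ?y "U_F_plus E b CF x \<inter> ?Ev" "{1..k}" a c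
    by (rule essential_swaps_at_W[OF model stab wW ess disj])
  have zI: "zI = apply_swaps ?y a c I"
    unfolding zI_def using apply_swaps_eq_sum[OF I] by auto
  have uninteresting: "\<not> interesting ?Ev b (CW w) (apply_swaps ?y a c J) e"
    if "J \<subseteq> {1..k}" "e \<in> U_F_plus E b CF x" for J e
    using apply_swaps_uninteresting[OF that(1), of e] that(2) unfolding interesting_def by blast
  have "essential_pair E b CW CF x w zI (c j) (a j)" if j: "j \<in> {1..k} - I" for j
  proof -
    have J: "insert j I \<subseteq> {1..k}" using j I by auto
    have "shift zI (a j) (c j) = apply_swaps ?y a c (insert j I)"
      using apply_swaps_insert[of j I] j I zI by auto
    then show ?thesis
      using ess j apply_swaps_acceptable[OF J] uninteresting[OF J]
      unfolding essential_pair_def legal_pair_def by auto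
  qed
  then show ?thesis using apply_swaps_acceptable[OF I] uninteresting[OF I] zI by auto
qed

end
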